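(* Let $\mathrm{Sol}$ be $\mathbb{R}^3$ with Riemannian metric $e^{-2z}dx^2+e^{2z}dy^2+dz^2$ and let $\mathcal{S}_r$ be the metric sphere of radius $r$ centered at the origin. Then $N_{X,r}=N_{Y,r}=2$.
   Context: $\eta_X(x,y,z)=(0,y,z)$ and $\eta_Y(x,y,z)=(x,0,z)$ are the projections onto the planes $\{x=0\}$ and $\{y=0\}$. For $W\in\{X,Y\}$, $N_{W,r}$ is the smallest integer $N$ such that the restriction of $\eta_W$ to $\mathcal{S}_r$ is at most $N$-to-$1$. *)

theory Defs
  imports "HOL-Analysis.Analysis"
begin

type_synonym point3 = "real \<times> real \<times> real"

definition sol_speed :: "(real \<Rightarrow> point3) \<Rightarrow> real \<Rightarrow> real" where
  "sol_speed \<gamma> t =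
     (let (x, y, z) = \<gamma> t; (a, b, c) = vector_derivative \<gamma> (at t)
      in sqrt (exp (-2 * z) * a^2 + exp (2 * z) * b^2 + c^2))"

definition sol_dist :: "point3 \<Rightarrow> point3 \<Rightarrow> real" where
  "sol_dist p q = Inf {L. \<exists>\<gamma>. \<gamma> piecewise_C1_differentiable_on {0..1} \<and>
       \<gamma> 0 = p \<and> \<gamma> 1 = q \<and> (sol_speed \<gamma> has_integral L) {0..1}}"

definition sol_sphere :: "real \<Rightarrow> point3 set" where
  "sol_sphere r = {p. sol_dist (0, 0, 0) p = r}"

definition eta_X :: "point3 \<Rightarrow> point3" where
  "eta_X p = (case p of (x, y, z) \<Rightarrow> (0, y, z))"

definition eta_Y :: "point3 \<Rightarrow> point3" where
  "eta_Y p = (case p of (x, y, z) \<Rightarrow> (x, 0, z))"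

definition at_most_N_to_one :: "('a \<Rightarrow> 'b) \<Rightarrow> 'a set \<Rightarrow> nat \<Rightarrow> bool" where
  "at_most_N_to_one f S N \<longleftrightarrow>
     (\<forall>q. finite {p \<in> S. f p = q} \<and> card {p \<in> S. f p = q} \<le> N)"

definition N_num :: "(point3 \<Rightarrow> point3) \<Rightarrow> real \<Rightarrow> nat" where
  "N_num \<eta> r = (LEAST N. at_most_N_to_one \<eta> (sol_sphere r) N)"

end

theory Submission
  imports Defs
begin

(*
  The reflections (x, y, z) \<mapsto> (-x, y, z) and (x, y, z) \<mapsto> (y, x, -z) preserve the Sol
  metric and fix the origin.  Hence the points (\<plusminus>t, 0, 0) and (0, \<plusminus>t, 0) lie on the sphere
  S_r as soon as (t, 0, 0) does, and such a t > 0 exists by the intermediate value theorem: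
  the distance to the origin is continuous along the x-axis, vanishes at 0 and is at least r
  at r e^r.  So each of the two projections has a fibre with two points.

  Conversely, for fixed y and z the distance to the origin is strictly increasing in |x|.
  Multiplying the x-component of a path by c with |c| < 1 lowers its speed at time t by at
  least a fixed multiple of e^(-z(t)) |x'(t)|, and along a path of length L the height stays
  below L.  Integrating, the shortened path saves an amount proportional to e^(-L) |x|, which
  is bounded below uniformly over nearly minimal paths.  Thus a fibre of eta_X on S_r lies in
  {(\<plusminus>a, y, z)}, and by the second reflection a fibre of eta_Y lies in {(x, \<plusminus>a, z)}.
*)

definition sol_norm :: "point3 \<Rightarrow> point3 \<Rightarrow> real" where
  "sol_norm p v =
     sqrt (exp (-2 * snd (snd p)) * (fst v)^2 + exp (2 * snd (snd p)) * (fst (snd v))^2 + (snd (snd v))^2)"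

lemma sol_speed_eq_sol_norm: "sol_speed \<gamma> t = sol_norm (\<gamma> t) (vector_derivative \<gamma> (at t))"
  by (simp add: sol_speed_def sol_norm_def split: prod.splits)

lemma sol_speed_at:
  "(\<gamma> has_vector_derivative v) (at t) \<Longrightarrow> sol_speed \<gamma> t = sol_norm (\<gamma> t) v"
  by (metis vector_derivative_at sol_speed_eq_sol_norm)

lemma sol_norm_nonneg: "0 \<le> sol_norm p v"
  by (simp add: sol_norm_def)

lemma abs_z_le_sol_norm: "\<bar>snd (snd v)\<bar> \<le> sol_norm p v"
  unfolding sol_norm_def by (rule real_le_rsqrt) (simp add: add_nonneg_nonneg)

lemma exp_minus_power2: "(exp (- z))^2 = exp (-2 * z :: real)"
  by (simp add: power2_eq_square flip: exp_add)

lemma abs_x_le_sol_norm: "exp (- snd (snd p)) * \<bar>fst v\<bar> \<le> sol_norm p v"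
proof -
  have "(exp (- snd (snd p)) * \<bar>fst v\<bar>)^2 = exp (-2 * snd (snd p)) * (fst v)^2"
    by (simp add: power_mult_distrib exp_minus_power2)
  then show ?thesis
    unfolding sol_norm_def by (intro real_le_rsqrt) (simp add: add_nonneg_nonneg)
qed

definition origin_path :: "(real \<Rightarrow> point3) \<Rightarrow> point3 \<Rightarrow> real \<Rightarrow> bool" where
  "origin_path \<gamma> p L \<longleftrightarrow> \<gamma> piecewise_C1_differentiable_on {0..1} \<and> \<gamma> 0 = 0 \<and> \<gamma> 1 = p \<and>
     (sol_speed \<gamma> has_integral L) {0..1}"

abbreviation sol_dist0 :: "point3 \<Rightarrow> real" where
  "sol_dist0 p \<equiv> sol_dist (0, 0, 0) p"

lemma sol_dist0_eq_Inf: "sol_dist0 p = Inf {L. \<exists>\<gamma>. origin_path \<gamma> p L}"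
  by (simp add: sol_dist_def origin_path_def zero_prod_def)

lemma origin_path_length_nonneg: "origin_path \<gamma> p L \<Longrightarrow> 0 \<le> L"
  unfolding origin_path_def
  by (auto intro: has_integral_nonneg simp: sol_speed_eq_sol_norm sol_norm_nonneg)

lemma origin_path_exists: "\<exists>\<gamma> L. origin_path \<gamma> p L"
proof -
  let ?\<gamma> = "\<lambda>t::real. t *\<^sub>R p"
  have der: "(?\<gamma> has_vector_derivative p) (at t)" for t
    by (auto intro!: derivative_eq_intros)
  have "continuous_on {0..1} (\<lambda>t. sol_norm (?\<gamma> t) p)"
    unfolding sol_norm_def by (intro continuous_intros)
  then have "sol_speed ?\<gamma> integrable_on {0..1}"
    by (simp add: sol_speed_at[OF der] integrable_continuous_interval)
  moreover have "?\<gamma> piecewise_C1_differentiable_on {0..1}"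
    by (intro C1_differentiable_imp_piecewise derivative_intros)
  ultimately have "origin_path ?\<gamma> p (integral {0..1} (sol_speed ?\<gamma>))"
    by (simp add: origin_path_def has_integral_integral)
  then show ?thesis
    by blast
qed

lemma sol_dist0_le_path: "origin_path \<gamma> p L \<Longrightarrow> sol_dist0 p \<le> L"
  unfolding sol_dist0_eq_Inf
  by (rule cInf_lower) (auto intro!: bdd_belowI origin_path_length_nonneg)

lemma sol_dist0_ge: "(\<And>\<gamma> L. origin_path \<gamma> p L \<Longrightarrow> c \<le> L) \<Longrightarrow> c \<le> sol_dist0 p"
  unfolding sol_dist0_eq_Inf using origin_path_exists[of p]
  by (intro cInf_greatest) auto

lemma sol_dist0_ge_nearly_minimal:
  assumes "\<And>\<gamma> L. origin_path \<gamma> p L \<Longrightarrow> L < sol_dist0 p + 1 \<Longrightarrow> c \<le> L"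
  shows "c \<le> sol_dist0 p"
proof (rule ccontr)
  assume "\<not> c \<le> sol_dist0 p"
  then have "Inf {L. \<exists>\<gamma>. origin_path \<gamma> p L} < min (sol_dist0 p + 1) c"
    unfolding sol_dist0_eq_Inf[symmetric] by simp
  with origin_path_exists[of p] obtain \<gamma> L where "origin_path \<gamma> p L" "L < min (sol_dist0 p + 1) c"
    using cInf_lessD[of "{L. \<exists>\<gamma>. origin_path \<gamma> p L}"] by blast
  with assms show False
    by fastforce
qed

lemma sol_dist0_nonneg: "0 \<le> sol_dist0 p"
  using sol_dist0_ge origin_path_length_nonneg by blast

lemma sol_dist0_origin: "sol_dist0 (0, 0, 0) = 0"
proof -
  have "sol_speed (\<lambda>t. 0) = (\<lambda>t. 0)"
    by (simp add: fun_eq_iff sol_speed_eq_sol_norm sol_norm_def)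
  then have "origin_path (\<lambda>t. 0) 0 0"
    by (simp add: origin_path_def piecewise_C1_differentiable_const)
  then show ?thesis
    using sol_dist0_le_path sol_dist0_nonneg by (metis order_antisym zero_prod_def)
qed

lemma piecewise_C1_differentiable_onE:
  assumes "\<gamma> piecewise_C1_differentiable_on {a..b}"
  obtains T where "finite T" "continuous_on {a..b} \<gamma>"
    "\<And>t. t \<in> {a..b} - T \<Longrightarrow> (\<gamma> has_vector_derivative vector_derivative \<gamma> (at t)) (at t)"
    "continuous_on ({a..b} - T) (\<lambda>t. vector_derivative \<gamma> (at t))"
  using assms unfolding piecewise_C1_differentiable_on_def C1_differentiable_on_eq
  by (metis vector_derivative_works)

lemma piecewise_C1_has_integral_vector_derivative:
  fixes \<gamma> :: "real \<Rightarrow> 'a::euclidean_space"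
  assumes "\<gamma> piecewise_C1_differentiable_on {a..b}" "a \<le> b"
  shows "((\<lambda>t. vector_derivative \<gamma> (at t)) has_integral \<gamma> b - \<gamma> a) {a..b}"
proof -
  obtain T where "finite T" "continuous_on {a..b} \<gamma>"
    "\<And>t. t \<in> {a..b} - T \<Longrightarrow> (\<gamma> has_vector_derivative vector_derivative \<gamma> (at t)) (at t)"
    using piecewise_C1_differentiable_onE[OF assms(1)] by metis
  then show ?thesis
    using assms(2) by (intro fundamental_theorem_of_calculus_interior_strong[of T]) auto
qed

lemma piecewise_C1_differentiable_bounded_linear:
  assumes "f piecewise_C1_differentiable_on S" "bounded_linear A"
  shows "(\<lambda>x. A (f x)) piecewise_C1_differentiable_on S"
proof -
  obtain T where T: "finite T" "f C1_differentiable_on S - T" and "continuous_on S f"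
    using assms(1) by (auto simp: piecewise_C1_differentiable_on_def)
  have "continuous_on S (\<lambda>x. A (f x))"
    using \<open>continuous_on S f\<close> by (rule bounded_linear.continuous_on[OF assms(2)])
  moreover have "(\<lambda>x. A (f x)) C1_differentiable_on S - T"
  proof -
    obtain D where "\<And>x. x \<in> S - T \<Longrightarrow> (f has_vector_derivative D x) (at x)"
      and "continuous_on (S - T) D"
      using T(2) by (auto simp: C1_differentiable_on_def)
    then show ?thesis
      unfolding C1_differentiable_on_def
      by (intro exI[of _ "\<lambda>x. A (D x)"] conjI ballI bounded_linear.has_vector_derivative[OF assms(2)])
         (auto intro: bounded_linear.continuous_on[OF assms(2)])
  qed
  ultimately show ?thesis
    using T(1) by (auto simp: piecewise_C1_differentiable_on_def)
qed

lemma abs_z_le_length: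
  assumes "origin_path \<gamma> p L" "\<tau> \<in> {0..1}"
  shows "\<bar>snd (snd (\<gamma> \<tau>))\<bar> \<le> L"
proof -
  have pw: "\<gamma> piecewise_C1_differentiable_on {0..1}" and "\<gamma> 0 = 0"
    and L: "(sol_speed \<gamma> has_integral L) {0..1}"
    using assms(1) by (auto simp: origin_path_def)
  then have z: "((\<lambda>t. snd (snd (vector_derivative \<gamma> (at t)))) has_integral snd (snd (\<gamma> \<tau>))) {0..\<tau>}"
    using has_integral_linear[OF piecewise_C1_has_integral_vector_derivative
        [OF piecewise_C1_differentiable_on_subset[OF pw, of "{0..\<tau>}"]]
        bounded_linear_compose[OF bounded_linear_snd bounded_linear_snd]] assms(2)
    by (simp add: o_def)
  have int: "sol_speed \<gamma> integrable_on {0..\<tau>}"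
    using integrable_subinterval_real[of "sol_speed \<gamma>" 0 1 0 \<tau>] L assms(2) by auto
  have "integral {0..\<tau>} (sol_speed \<gamma>) \<le> L"
    using has_integral_subset_le[of "{0..\<tau>}" "{0..1}" "sol_speed \<gamma>"] int L assms(2)
    by (auto simp: sol_norm_nonneg sol_speed_eq_sol_norm)
  moreover have "snd (snd (\<gamma> \<tau>)) \<le> integral {0..\<tau>} (sol_speed \<gamma>)"
    by (rule has_integral_le[OF z integrable_integral[OF int]])
       (metis abs_le_D1 abs_z_le_sol_norm sol_speed_eq_sol_norm)
  moreover have "- snd (snd (\<gamma> \<tau>)) \<le> integral {0..\<tau>} (sol_speed \<gamma>)"
    by (rule has_integral_le[OF has_integral_neg[OF z] integrable_integral[OF int]])
       (metis abs_le_D2 abs_z_le_sol_norm sol_speed_eq_sol_norm)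
  ultimately show ?thesis
    by linarith
qed

lemma sol_speed_integral_le:
  assumes pw: "\<gamma> piecewise_C1_differentiable_on {a..b}" and "finite T" and g: "g integrable_on {a..b}"
    and le: "\<And>t. t \<in> {a..b} - T \<Longrightarrow> sol_speed \<gamma> t \<le> g t"
  shows "sol_speed \<gamma> integrable_on {a..b}" "integral {a..b} (sol_speed \<gamma>) \<le> integral {a..b} g"
proof -
  obtain T' where T': "finite T'" "continuous_on {a..b} \<gamma>"
    "continuous_on ({a..b} - T') (\<lambda>t. vector_derivative \<gamma> (at t))"
    using piecewise_C1_differentiable_onE[OF pw] by metis
  define S where "S = {a..b} - (T \<union> T')"
  have fin: "finite (T \<union> T')"
    using T'(1) \<open>finite T\<close> by simp
  have neg: "negligible {x \<in> S - {a..b}. f x \<noteq> 0}" "negligible {x \<in> {a..b} - S. f x \<noteq> 0}"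
    for f :: "real \<Rightarrow> real"
    by (rule negligible_subset[OF negligible_finite[OF fin]]; force simp: S_def)+
  have S: "S \<in> sets lebesgue"
    unfolding S_def using negligible_imp_sets[OF negligible_finite[OF fin]] by (intro sets.Diff) auto
  have "continuous_on S (\<lambda>t. sol_norm (\<gamma> t) (vector_derivative \<gamma> (at t)))"
    unfolding sol_norm_def using T'(2,3)
    by (intro continuous_intros; force simp: S_def intro: continuous_on_subset)
  then have "sol_speed \<gamma> \<in> borel_measurable (lebesgue_on S)"
    unfolding sol_speed_eq_sol_norm[abs_def] using S by (rule continuous_imp_measurable_on_sets_lebesgue)
  moreover have gS: "g integrable_on S"
    using integrable_spike_set[OF g neg(2) neg(1)] .
  moreover have bound: "\<bar>sol_speed \<gamma> t\<bar> \<le> g t" if "t \<in> S" for t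
    using le[of t] that sol_norm_nonneg by (auto simp: S_def sol_speed_eq_sol_norm)
  ultimately have intS: "sol_speed \<gamma> integrable_on S"
    using S by (rule measurable_bounded_by_integrable_imp_integrable_real)
  then show "sol_speed \<gamma> integrable_on {a..b}"
    using integrable_spike_set[OF _ neg(1) neg(2)] by blast
  have "integral S (sol_speed \<gamma>) \<le> integral S g"
    using intS gS bound by (intro integral_le) (auto dest: abs_le_D1)
  then show "integral {a..b} (sol_speed \<gamma>) \<le> integral {a..b} g"
    by (simp add: integral_spike_set[OF neg(1) neg(2)])
qed

lemma sol_dist0_affine_image_le:
  assumes path: "origin_path \<gamma> p L" and A: "bounded_linear A" and g: "g integrable_on {0..1}"
    and le: "\<And>t v. t \<in> {0<..<1} \<Longrightarrow> (\<gamma> has_vector_derivative v) (at t) \<Longrightarrow>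
              sol_norm (A (\<gamma> t) + t *\<^sub>R w) (A v + w) \<le> g t"
  shows "sol_dist0 (A p + w) \<le> integral {0..1} g"
proof -
  define \<gamma>' where "\<gamma>' t = A (\<gamma> t) + t *\<^sub>R w" for t
  have pw: "\<gamma> piecewise_C1_differentiable_on {0..1}" and "\<gamma> 0 = 0" "\<gamma> 1 = p"
    using path by (auto simp: origin_path_def)
  then obtain T where T: "finite T"
    "\<And>t. t \<in> {0..1} - T \<Longrightarrow> (\<gamma> has_vector_derivative vector_derivative \<gamma> (at t)) (at t)"
    by (metis piecewise_C1_differentiable_onE)
  have pw': "\<gamma>' piecewise_C1_differentiable_on {0..1}"
    unfolding \<gamma>'_def
    by (intro piecewise_C1_differentiable_add piecewise_C1_differentiable_bounded_linear[OF pw A]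
        C1_differentiable_imp_piecewise derivative_intros)
  have "sol_speed \<gamma>' t \<le> g t" if t: "t \<in> {0..1} - ({0, 1} \<union> T)" for t
  proof -
    have "(\<gamma>' has_vector_derivative A (vector_derivative \<gamma> (at t)) + w) (at t)"
      unfolding \<gamma>'_def using t T(2)
      by (auto intro!: derivative_eq_intros bounded_linear.has_vector_derivative[OF A])
    then show ?thesis
      using le[of t] T(2) t by (auto simp: sol_speed_at \<gamma>'_def)
  qed
  then have "sol_speed \<gamma>' integrable_on {0..1}" "integral {0..1} (sol_speed \<gamma>') \<le> integral {0..1} g"
    using sol_speed_integral_le[OF pw' _ g, of "{0, 1} \<union> T"] T(1) by auto
  moreover have "\<gamma>' 0 = 0" "\<gamma>' 1 = A p + w"
    using \<open>\<gamma> 0 = 0\<close> \<open>\<gamma> 1 = p\<close> by (simp_all add: \<gamma>'_def linear_simps(3)[OF A])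
  ultimately show ?thesis
    using pw' by (intro order_trans[OF sol_dist0_le_path]) (auto simp: origin_path_def has_integral_integral)
qed

lemma sol_dist0_linear_image_le:
  assumes A: "bounded_linear A" and norm: "\<And>p v. sol_norm (A p) (A v) \<le> sol_norm p v"
  shows "sol_dist0 (A p) \<le> sol_dist0 p"
proof (rule sol_dist0_ge)
  fix \<gamma> L
  assume path: "origin_path \<gamma> p L"
  then have L: "(sol_speed \<gamma> has_integral L) {0..1}"
    by (simp add: origin_path_def)
  have "sol_dist0 (A p + 0) \<le> integral {0..1} (sol_speed \<gamma>)"
    by (rule sol_dist0_affine_image_le[OF path A]) (use L norm in \<open>auto simp: sol_speed_at\<close>)
  with L show "sol_dist0 (A p) \<le> L"
    by (simp add: integral_unique)
qed

lemma sol_dist0_swap: "sol_dist0 (y, x, -z) = sol_dist0 (x, y, z)"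
proof -
  define \<sigma> :: "point3 \<Rightarrow> point3" where "\<sigma> p = (fst (snd p), fst p, - snd (snd p))" for p
  have "bounded_linear \<sigma>"
    unfolding \<sigma>_def by (auto intro!: bounded_linear_intros bounded_linear_minus)
  moreover have "sol_norm (\<sigma> p) (\<sigma> v) = sol_norm p v" for p v
    by (simp add: sol_norm_def \<sigma>_def add_ac)
  ultimately have "sol_dist0 (\<sigma> p) \<le> sol_dist0 p" for p
    by (intro sol_dist0_linear_image_le) auto
  from this[of "(x, y, z)"] this[of "(y, x, -z)"] show ?thesis
    by (simp add: \<sigma>_def)
qed

lemma sol_dist0_neg_x: "sol_dist0 (-x, y, z) = sol_dist0 (x, y, z)"
proof -
  define \<sigma> :: "point3 \<Rightarrow> point3" where "\<sigma> p = (- fst p, snd p)" for p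
  have "bounded_linear \<sigma>"
    unfolding \<sigma>_def by (auto intro!: bounded_linear_intros bounded_linear_minus)
  moreover have "sol_norm (\<sigma> p) (\<sigma> v) = sol_norm p v" for p v
    by (simp add: sol_norm_def \<sigma>_def)
  ultimately have "sol_dist0 (\<sigma> p) \<le> sol_dist0 p" for p
    by (intro sol_dist0_linear_image_le) auto
  from this[of "(x, y, z)"] this[of "(-x, y, z)"] show ?thesis
    by (simp add: \<sigma>_def)
qed

lemma has_integral_x_velocity:
  assumes "origin_path \<gamma> p L"
  shows "((\<lambda>t. fst (vector_derivative \<gamma> (at t))) has_integral fst p) {0..1}"
  using has_integral_linear[OF piecewise_C1_has_integral_vector_derivative[of \<gamma> 0 1] bounded_linear_fst]
    assms by (simp add: origin_path_def o_def)

(* The right-hand side is linear in n and u, so along a path it can be integrated; with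
   t = 2 \<alpha> u - \<alpha>\<^sup>2 n it equals n - k t, and t n \<le> u\<^sup>2 with equality at \<alpha> = u / n. *)
lemma sqrt_square_diff_le:
  fixes n u k \<alpha> :: real
  assumes "0 \<le> u" "u \<le> n" "0 \<le> k" "k \<le> 1/2" "0 \<le> \<alpha>"
  shows "sqrt (n^2 - 2*k*u^2) \<le> n - 2*k*\<alpha>*u + k*\<alpha>^2*n"
proof -
  define t where "t = 2*\<alpha>*u - \<alpha>^2*n"
  have "0 \<le> (u - \<alpha>*n)^2"
    by simp
  then have ts: "t*n \<le> u^2"
    unfolding t_def by (simp add: power2_eq_square algebra_simps)
  have "t \<le> n - (\<alpha> - 1)^2 * n"
    unfolding t_def using assms by (simp add: power2_eq_square algebra_simps mult_left_mono)
  also have "\<dots> \<le> n"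
    using assms by simp
  finally have "k*t \<le> k * n"
    using assms by (simp add: mult_left_mono)
  also have "\<dots> \<le> (1/2) * n"
    using assms by (intro mult_right_mono) auto
  finally have "k*t \<le> (1/2) * n" .
  then have pos: "0 \<le> n - k*t"
    using assms by linarith
  have "n^2 - 2*k*u^2 \<le> n^2 - 2*k*(t*n)"
    using ts assms by (simp add: mult_left_mono)
  also have "\<dots> \<le> (n - k*t)^2"
    using zero_le_power2[of "k*t"] by (simp add: power2_eq_square algebra_simps)
  finally have "sqrt (n^2 - 2*k*u^2) \<le> sqrt ((n - k*t)^2)"
    by (rule real_sqrt_le_mono)
  then have "sqrt (n^2 - 2*k*u^2) \<le> n - k*t"
    using pos by simp
  then show ?thesis
    unfolding t_def by (simp add: algebra_simps power2_eq_square)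
qed

lemma sol_norm_scale_x_le:
  assumes "snd (snd p) \<le> M" "c^2 \<le> 1" "0 \<le> \<alpha>" "\<bar>\<sigma>\<bar> \<le> 1"
  shows "sol_norm (c * fst p, snd p) (c * fst v, snd v)
    \<le> (1 + (1 - c^2)/2 * \<alpha>^2) * sol_norm p v - (1 - c^2) * \<alpha> * exp (-M) * (\<sigma> * fst v)"
proof -
  define k where "k = (1 - c^2)/2"
  define n where "n = sol_norm p v"
  define u where "u = exp (- snd (snd p)) * \<bar>fst v\<bar>"
  have k: "0 \<le> k" "k \<le> 1/2"
    using assms(2) by (auto simp: k_def)
  have n2: "n^2 = exp (-2 * snd (snd p)) * (fst v)^2 + exp (2 * snd (snd p)) * (fst (snd v))^2 + (snd (snd v))^2"
    unfolding n_def sol_norm_def by (simp add: add_nonneg_nonneg)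
  have u2: "u^2 = exp (-2 * snd (snd p)) * (fst v)^2"
    unfolding u_def by (simp add: power_mult_distrib exp_minus_power2)
  have "exp (-2 * snd (snd p)) * (c * fst v)^2 + exp (2 * snd (snd p)) * (fst (snd v))^2 + (snd (snd v))^2
      = n^2 - 2*k*u^2"
    unfolding n2 u2 k_def by (simp add: power_mult_distrib field_simps)
  then have "sol_norm (c * fst p, snd p) (c * fst v, snd v) = sqrt (n^2 - 2*k*u^2)"
    by (simp add: sol_norm_def)
  also have "\<dots> \<le> n - 2*k*\<alpha>*u + k*\<alpha>^2*n"
    using sqrt_square_diff_le[OF _ _ k assms(3), of u n] abs_x_le_sol_norm
    by (auto simp: u_def n_def)
  also have "\<dots> \<le> n - 2*k*\<alpha>*(exp (-M) * (\<sigma> * fst v)) + k*\<alpha>^2*n"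
  proof -
    have "\<sigma> * fst v \<le> \<bar>\<sigma>\<bar> * \<bar>fst v\<bar>"
      by (metis abs_ge_self abs_mult)
    also have "\<dots> \<le> \<bar>fst v\<bar>"
      using assms(4) by (simp add: mult_left_le_one_le)
    finally have "exp (-M) * (\<sigma> * fst v) \<le> exp (-M) * \<bar>fst v\<bar>"
      by (rule mult_left_mono) simp
    also have "\<dots> \<le> u"
      unfolding u_def using assms(1) by (intro mult_right_mono) auto
    finally have "exp (-M) * (\<sigma> * fst v) \<le> u" .
    then show ?thesis
      using k assms(3) by (simp add: mult_left_mono)
  qed
  also have "\<dots> = (1 + k*\<alpha>^2) * n - (2*k) * \<alpha> * exp (-M) * (\<sigma> * fst v)"
    by (simp add: algebra_simps)
  moreover have "1 - c^2 = 2*k"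
    by (simp add: k_def)
  ultimately show ?thesis
    by (simp add: n_def)
qed

lemma sol_dist0_scale_x_le_length:
  assumes path: "origin_path \<gamma> (x, y, z) L" and "L < M" "c^2 \<le> 1" "0 \<le> \<alpha>"
  shows "sol_dist0 (c * x, y, z) \<le> (1 + (1 - c^2)/2 * \<alpha>^2) * L - (1 - c^2) * \<alpha> * exp (-M) * \<bar>x\<bar>"
proof -
  define A :: "point3 \<Rightarrow> point3" where "A p = (c * fst p, snd p)" for p
  define a where "a = 1 + (1 - c^2)/2 * \<alpha>^2"
  define b where "b = (1 - c^2) * \<alpha> * exp (-M) * sgn x"
  define g where "g t = a * sol_speed \<gamma> t - b * fst (vector_derivative \<gamma> (at t))" for t
  have L: "(sol_speed \<gamma> has_integral L) {0..1}"
    using path by (simp add: origin_path_def)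
  have g: "(g has_integral a * L - b * x) {0..1}"
    unfolding g_def using has_integral_x_velocity[OF path]
    by (intro has_integral_diff has_integral_mult_right L) simp
  have "bounded_linear A"
    unfolding A_def by (auto intro!: bounded_linear_intros)
  then have "sol_dist0 (A (x, y, z) + 0) \<le> integral {0..1} g"
  proof (rule sol_dist0_affine_image_le[OF path _ has_integral_integrable[OF g]])
    fix t v
    assume "t \<in> {0<..<1}" and v: "(\<gamma> has_vector_derivative v) (at t)"
    then have "snd (snd (\<gamma> t)) \<le> M"
      using abs_z_le_length[OF path, of t] \<open>L < M\<close> by auto
    then show "sol_norm (A (\<gamma> t) + t *\<^sub>R 0) (A v + 0) \<le> g t"
      using sol_norm_scale_x_le[of "\<gamma> t" M c \<alpha> "sgn x" v] assms(3,4)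
      by (simp add: A_def g_def a_def b_def sol_speed_at[OF v] vector_derivative_at[OF v]
          abs_sgn_eq mult.assoc)
  qed
  moreover have "sgn x * x = \<bar>x\<bar>"
    by (simp add: sgn_mult_self_eq abs_sgn mult.commute)
  ultimately show ?thesis
    using integral_unique[OF g] by (simp add: A_def a_def b_def mult.assoc)
qed

lemma sol_dist0_scale_x_less:
  assumes "x \<noteq> 0" "\<bar>c\<bar> < 1"
  shows "sol_dist0 (c * x, y, z) < sol_dist0 (x, y, z)"
proof -
  define M where "M = sol_dist0 (x, y, z) + 1"
  define k where "k = (1 - c^2)/2"
  define b where "b = exp (-M) * \<bar>x\<bar>"
  have "M > 0"
    using sol_dist0_nonneg by (simp add: M_def add_nonneg_pos)
  have "c^2 < 1"
    using assms(2) by (simp add: abs_square_less_1)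
  have "sol_dist0 (c * x, y, z) + k * b^2 / M \<le> sol_dist0 (x, y, z)"
  proof (rule sol_dist0_ge_nearly_minimal)
    fix \<gamma> L
    assume path: "origin_path \<gamma> (x, y, z) L" and "L < sol_dist0 (x, y, z) + 1"
    then have "L < M"
      by (simp add: M_def)
    have k: "(1 - c^2)/2 = k" "1 - c^2 = 2 * k"
      by (simp_all add: k_def)
    \<comment> \<open>the choice \<open>\<alpha> = b / M\<close> optimises the bound for paths of length below \<open>M\<close>\<close>
    have "sol_dist0 (c * x, y, z) \<le> (1 + k * (b/M)^2) * L - 2 * k * (b/M) * b"
      using sol_dist0_scale_x_le_length[OF path \<open>L < M\<close>, of c "b/M"] \<open>c^2 < 1\<close> \<open>M > 0\<close>
      unfolding k by (simp add: b_def mult.assoc)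
    moreover have "k * (b/M)^2 * L \<le> k * (b/M)^2 * M"
      using \<open>L < M\<close> \<open>c^2 < 1\<close> by (intro mult_left_mono) (auto simp: k_def)
    moreover have "k * (b/M)^2 * M = k * b^2 / M" "2 * k * (b/M) * b = 2 * (k * b^2 / M)"
      using \<open>M > 0\<close> by (simp_all add: power2_eq_square)
    moreover have "(1 + k * (b/M)^2) * L = L + k * (b/M)^2 * L"
      by (simp add: algebra_simps)
    ultimately show "sol_dist0 (c * x, y, z) + k * b^2 / M \<le> L"
      by linarith
  qed
  moreover have "k * b^2 / M > 0"
    using assms(1) \<open>c^2 < 1\<close> \<open>M > 0\<close> by (simp add: k_def b_def)
  ultimately show ?thesis
    by linarith
qed

lemma sol_dist0_less_abs_x:
  assumes "\<bar>x\<bar> < \<bar>x'\<bar>"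
  shows "sol_dist0 (x, y, z) < sol_dist0 (x', y, z)"
  using sol_dist0_scale_x_less[of x' "x / x'" y z] assms by (simp add: abs_divide)

lemma sol_dist0_eq_imp_abs_x_eq:
  "sol_dist0 (x, y, z) = sol_dist0 (x', y, z) \<Longrightarrow> \<bar>x\<bar> = \<bar>x'\<bar>"
  using sol_dist0_less_abs_x[of x x' y z] sol_dist0_less_abs_x[of x' x y z] by linarith

lemma sqrt_shift_le:
  fixes E B a \<delta> :: real
  assumes "0 \<le> E" "0 \<le> B"
  shows "sqrt (E * (a + \<delta>)^2 + B) \<le> sqrt (E * a^2 + B) + sqrt E * \<bar>\<delta>\<bar>"
proof -
  have "(sqrt E * a + sqrt E * \<delta>)^2 = E * (a + \<delta>)^2"
    using assms by (simp add: power_mult_distrib flip: distrib_left)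
  then show ?thesis
    using real_sqrt_sum_squares_triangle_ineq[of "sqrt E * a" "sqrt E * \<delta>" "sqrt B" 0] assms
    by (simp add: power_mult_distrib real_sqrt_mult)
qed

lemma sol_norm_shift_x_le:
  "sol_norm p (v + (\<delta>, 0, 0)) \<le> sol_norm p v + exp (- snd (snd p)) * \<bar>\<delta>\<bar>"
proof -
  have "sqrt ((exp (- snd (snd p)))^2) = exp (- snd (snd p))"
    by simp
  then have "sqrt (exp (-2 * snd (snd p))) = exp (- snd (snd p))"
    by (simp only: exp_minus_power2)
  then show ?thesis
    using sqrt_shift_le[of "exp (-2 * snd (snd p))" "exp (2 * snd (snd p)) * (fst (snd v))^2 + (snd (snd v))^2"
        "fst v" \<delta>]
    by (simp add: sol_norm_def add.assoc)
qed

lemma sol_dist0_shift_x_le_length: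
  assumes path: "origin_path \<gamma> (x, y, z) L"
  shows "sol_dist0 (x + \<delta>, y, z) \<le> L + exp L * \<bar>\<delta>\<bar>"
proof -
  define w :: point3 where "w = (\<delta>, 0, 0)"
  define g where "g t = sol_speed \<gamma> t + exp L * \<bar>\<delta>\<bar>" for t
  have g: "(g has_integral L + exp L * \<bar>\<delta>\<bar>) {0..1}"
    unfolding g_def using path has_integral_const_real[of "exp L * \<bar>\<delta>\<bar>" 0 1]
    by (intro has_integral_add) (auto simp: origin_path_def)
  have "sol_dist0 ((x, y, z) + w) \<le> integral {0..1} g"
  proof (rule sol_dist0_affine_image_le[where A = "\<lambda>p. p", OF path bounded_linear_ident has_integral_integrable[OF g]])
    fix t v
    assume "t \<in> {0<..<1}" and v: "(\<gamma> has_vector_derivative v) (at t)"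
    then have "exp (- snd (snd (\<gamma> t))) \<le> exp L"
      using abs_z_le_length[OF path, of t] by auto
    then have "sol_norm (\<gamma> t) (v + w) \<le> sol_norm (\<gamma> t) v + exp L * \<bar>\<delta>\<bar>"
      using sol_norm_shift_x_le[of "\<gamma> t" v \<delta>] mult_right_mono[of _ _ "\<bar>\<delta>\<bar>"]
      by (fastforce simp: w_def)
    moreover have "sol_norm (\<gamma> t + t *\<^sub>R w) = sol_norm (\<gamma> t)"
      by (simp add: sol_norm_def w_def fun_eq_iff)
    ultimately show "sol_norm (\<gamma> t + t *\<^sub>R w) (v + w) \<le> g t"
      by (simp add: g_def sol_speed_at[OF v])
  qed
  then show ?thesis
    using integral_unique[OF g] by (simp add: w_def)
qed

lemma sol_dist0_shift_x_le:
  "sol_dist0 (x + \<delta>, y, z) \<le> sol_dist0 (x, y, z) + exp (sol_dist0 (x, y, z) + 1) * \<bar>\<delta>\<bar>"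
proof -
  have "sol_dist0 (x + \<delta>, y, z) - exp (sol_dist0 (x, y, z) + 1) * \<bar>\<delta>\<bar> \<le> sol_dist0 (x, y, z)"
  proof (rule sol_dist0_ge_nearly_minimal)
    fix \<gamma> L
    assume path: "origin_path \<gamma> (x, y, z) L" and "L < sol_dist0 (x, y, z) + 1"
    then have "exp L * \<bar>\<delta>\<bar> \<le> exp (sol_dist0 (x, y, z) + 1) * \<bar>\<delta>\<bar>"
      by (intro mult_right_mono) auto
    then show "sol_dist0 (x + \<delta>, y, z) - exp (sol_dist0 (x, y, z) + 1) * \<bar>\<delta>\<bar> \<le> L"
      using sol_dist0_shift_x_le_length[OF path, of \<delta>] by linarith
  qed
  then show ?thesis
    by simp
qed

lemma continuous_on_sol_dist0_x:
  assumes "a \<le> b"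
  shows "continuous_on {a..b} (\<lambda>s. sol_dist0 (s, y, z))"
proof -
  let ?d = "\<lambda>s. sol_dist0 (s, y, z)"
  define B where "B = ?d a + exp (?d a + 1) * (b - a)"
  define C where "C = exp (B + 1)"
  have bounded: "?d s \<le> B" if "s \<in> {a..b}" for s
  proof -
    have "?d s \<le> ?d a + exp (?d a + 1) * (s - a)"
      using sol_dist0_shift_x_le[of a "s - a" y z] that by simp
    moreover have "exp (?d a + 1) * (s - a) \<le> exp (?d a + 1) * (b - a)"
      using that by (intro mult_left_mono) auto
    ultimately show ?thesis
      unfolding B_def by linarith
  qed
  have lip: "?d s \<le> ?d t + C * \<bar>s - t\<bar>" if "s \<in> {a..b}" "t \<in> {a..b}" for s t
  proof -
    have "exp (?d t + 1) * \<bar>s - t\<bar> \<le> C * \<bar>s - t\<bar>"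
      using bounded[OF that(2)] by (intro mult_right_mono) (auto simp: C_def)
    then show ?thesis
      using sol_dist0_shift_x_le[of t "s - t" y z] by simp
  qed
  have "C-lipschitz_on {a..b} ?d"
  proof (rule lipschitz_onI)
    fix s t
    assume "s \<in> {a..b}" "t \<in> {a..b}"
    then show "dist (?d s) (?d t) \<le> C * dist s t"
      using lip[of s t] lip[of t s] by (simp add: dist_real_def abs_minus_commute)
  qed (simp add: C_def)
  then show ?thesis
    by (rule lipschitz_on_continuous_on)
qed

lemma le_sol_dist0_x_axis: "r \<le> sol_dist0 (r * exp r, 0, 0)"
proof (rule sol_dist0_ge)
  fix \<gamma> L
  assume path: "origin_path \<gamma> (r * exp r, 0, 0) L"
  then have L: "(sol_speed \<gamma> has_integral L) {0..1}" and "0 \<le> L"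
    using origin_path_length_nonneg by (auto simp: origin_path_def)
  have "r * exp r \<le> exp L * L"
  proof (rule has_integral_le[OF has_integral_x_velocity[OF path, simplified] has_integral_mult_right[OF L]])
    fix t :: real
    assume "t \<in> {0..1}"
    then have "snd (snd (\<gamma> t)) \<le> L"
      using abs_z_le_length[OF path] by fastforce
    then have "exp (snd (snd (\<gamma> t))) * (exp (- snd (snd (\<gamma> t))) * \<bar>fst (vector_derivative \<gamma> (at t))\<bar>)
        \<le> exp L * sol_speed \<gamma> t"
      by (intro mult_mono) (auto simp: sol_speed_eq_sol_norm abs_x_le_sol_norm sol_norm_nonneg)
    then show "fst (vector_derivative \<gamma> (at t)) \<le> exp L * sol_speed \<gamma> t"
      by (simp add: mult.assoc[symmetric] flip: exp_add)
  qed
  then show "r \<le> L"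
    using \<open>0 \<le> L\<close> mult_strict_mono[of L r "exp L" "exp r"] by (cases "r \<le> L") (auto simp: mult.commute)
qed

lemma sol_sphere_meets_x_axis:
  assumes "r > 0"
  obtains t where "t > 0" "sol_dist0 (t, 0, 0) = r"
proof -
  have "0 \<le> r * exp r"
    using assms by simp
  then obtain t where "0 \<le> t" "sol_dist0 (t, 0, 0) = r"
    using IVT'[of "\<lambda>s. sol_dist0 (s, 0, 0)" 0 r "r * exp r"] sol_dist0_origin assms
      le_sol_dist0_x_axis continuous_on_sol_dist0_x by auto
  moreover have "t \<noteq> 0"
    using calculation sol_dist0_origin assms by auto
  ultimately show ?thesis
    by (intro that[of t]) auto
qed

lemma at_most_two_to_one_if_fibers_paired:
  assumes "\<And>p p'. p \<in> S \<Longrightarrow> p' \<in> S \<Longrightarrow> f p = f p' \<Longrightarrow> p' = p \<or> p' = \<sigma> p"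
  shows "at_most_N_to_one f S 2"
  unfolding at_most_N_to_one_def
proof
  fix q
  show "finite {p \<in> S. f p = q} \<and> card {p \<in> S. f p = q} \<le> 2"
  proof (cases "{p \<in> S. f p = q} = {}")
    case False
    then obtain p where "p \<in> S" "f p = q"
      by blast
    then have "{p \<in> S. f p = q} \<subseteq> {p, \<sigma> p}"
      using assms by blast
    moreover have "card {p, \<sigma> p} \<le> 2"
      by (simp add: card_insert_if)
    ultimately show ?thesis
      by (meson card_mono finite.emptyI finite.insertI finite_subset order_trans)
  qed (metis card.empty finite.emptyI zero_le)
qed

lemma Least_at_most_N_to_one_eq_2:
  assumes "at_most_N_to_one f S 2" "p \<in> S" "p' \<in> S" "p \<noteq> p'" "f p = f p'"
  shows "(LEAST N. at_most_N_to_one f S N) = 2"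
proof (rule Least_equality)
  fix N
  assume "at_most_N_to_one f S N"
  then have "finite {x \<in> S. f x = f p}" "card {x \<in> S. f x = f p} \<le> N"
    by (auto simp: at_most_N_to_one_def)
  moreover have "{p, p'} \<subseteq> {x \<in> S. f x = f p}"
    using assms by auto
  ultimately show "2 \<le> N"
    using card_mono[of "{x \<in> S. f x = f p}" "{p, p'}"] assms(4) by simp
qed (fact assms(1))

lemma sol_sphere_eta_X_fiber:
  assumes "p \<in> sol_sphere r" "p' \<in> sol_sphere r" "eta_X p = eta_X p'"
  shows "p' = p \<or> p' = (- fst p, snd p)"
proof -
  obtain x y z x' where "p = (x, y, z)" "p' = (x', y, z)"
    using assms(3) by (cases p, cases p') (auto simp: eta_X_def)
  moreover have "\<bar>x'\<bar> = \<bar>x\<bar>"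
    using assms(1,2) calculation sol_dist0_eq_imp_abs_x_eq[of x' y z x] by (simp add: sol_sphere_def)
  ultimately show ?thesis
    by (auto simp: abs_eq_iff)
qed

lemma sol_sphere_eta_Y_fiber:
  assumes "p \<in> sol_sphere r" "p' \<in> sol_sphere r" "eta_Y p = eta_Y p'"
  shows "p' = p \<or> p' = (fst p, - fst (snd p), snd (snd p))"
proof -
  obtain x y z y' where "p = (x, y, z)" "p' = (x, y', z)"
    using assms(3) by (cases p, cases p') (auto simp: eta_Y_def)
  moreover have "\<bar>y'\<bar> = \<bar>y\<bar>"
    using assms(1,2) calculation sol_dist0_swap[of y x z] sol_dist0_swap[of y' x z]
      sol_dist0_eq_imp_abs_x_eq[of y' x "-z" y] by (simp add: sol_sphere_def)
  ultimately show ?thesis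
    by (auto simp: abs_eq_iff)
qed

theorem mainTheorem3:
  fixes r :: real
  assumes "r > 0"
  shows "N_num eta_X r = 2 \<and> N_num eta_Y r = 2"
proof -
  obtain t where "t > 0" "sol_dist0 (t, 0, 0) = r"
    using sol_sphere_meets_x_axis[OF assms] .
  then have on_sphere: "(t, 0, 0) \<in> sol_sphere r" "(-t, 0, 0) \<in> sol_sphere r"
    "(0, t, 0) \<in> sol_sphere r" "(0, -t, 0) \<in> sol_sphere r"
    using sol_dist0_neg_x[of t 0 0] sol_dist0_swap[of 0 t 0] sol_dist0_swap[of 0 "-t" 0]
    by (auto simp: sol_sphere_def)
  have X: "at_most_N_to_one eta_X (sol_sphere r) 2"
    using sol_sphere_eta_X_fiber by (rule at_most_two_to_one_if_fibers_paired)
  have Y: "at_most_N_to_one eta_Y (sol_sphere r) 2"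
    using sol_sphere_eta_Y_fiber by (rule at_most_two_to_one_if_fibers_paired)
  have "N_num eta_X r = 2"
    unfolding N_num_def
    by (rule Least_at_most_N_to_one_eq_2[OF X on_sphere(1,2)]) (use \<open>t > 0\<close> in \<open>auto simp: eta_X_def\<close>)
  moreover have "N_num eta_Y r = 2"
    unfolding N_num_def
    by (rule Least_at_most_N_to_one_eq_2[OF Y on_sphere(3,4)]) (use \<open>t > 0\<close> in \<open>auto simp: eta_Y_def\<close>)
  ultimately show ?thesis ..
qed

end
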